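(* Let $T$ be a rooted tree with root $r$ and nonnegative node weights $p(\cdot)$, and let $H(T,r)$ be the weighted heavy path of $T$ containing $r$. Then a node $u\in H(T,r)$ minimizing $|2p(T_u)-p(T)|$ over $u\in H(T,r)$ is a middle point of $T$, i.e., it also minimizes $|2p(T_u)-p(T)|$ over all nodes $u$ of $T$.
   Context: Edges of $T$ are directed from parent to child. For a node $u$, $T_u$ is the subtree of $T$ rooted at $u$ (consisting of $u$ and all its descendants), and for a set $S$ of nodes $p(S)=\sum_{v\in S}p(v)$; $p(T)$ is the total weight of $T$. For each internal node $u$, choose a child $v$ of $u$ with the largest subtree weight $p(T_v)$ (ties broken arbitrarily); the edge $(u,v)$ is called heavy and the other outgoing edges of $u$ are light. A weighted heavy path is a maximal path formed by concatenating heavy edges; $H(T,r)$ is the one containing the root, i.e., the path obtained starting from $r$ and repeatedly following the heavy edge until reaching a leaf. *)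

theory Defs
  imports Complex_Main
begin

definition rooted_tree :: "'a set \<Rightarrow> ('a \<times> 'a) set \<Rightarrow> 'a \<Rightarrow> bool" where
  "rooted_tree V E r \<longleftrightarrow>
     finite V \<and> r \<in> V \<and> E \<subseteq> V \<times> V \<and>
     (\<forall>v\<in>V. (r, v) \<in> E\<^sup>*) \<and>
     (\<forall>v. (v, r) \<notin> E) \<and>
     (\<forall>v u w. (u, v) \<in> E \<and> (w, v) \<in> E \<longrightarrow> u = w)"

definition subtree :: "('a \<times> 'a) set \<Rightarrow> 'a \<Rightarrow> 'a set" where
  "subtree E u = E\<^sup>* `` {u}"

definition subtree_weight :: "('a \<times> 'a) set \<Rightarrow> ('a \<Rightarrow> real) \<Rightarrow> 'a \<Rightarrow> real" where
  "subtree_weight E p u = sum p (subtree E u)"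

text \<open>A weighted heavy path from the root (for some tie-breaking choice of heavy edges):
  starts at r, each step goes from u to a child v of u of maximal subtree weight,
  and it ends at a leaf.\<close>
definition heavy_root_path ::
  "('a \<times> 'a) set \<Rightarrow> ('a \<Rightarrow> real) \<Rightarrow> 'a \<Rightarrow> 'a list \<Rightarrow> bool" where
  "heavy_root_path E p r P \<longleftrightarrow>
     P \<noteq> [] \<and> hd P = r \<and>
     (\<forall>i. Suc i < length P \<longrightarrow>
        (P ! i, P ! Suc i) \<in> E \<and>
        (\<forall>c. (P ! i, c) \<in> E \<longrightarrow> subtree_weight E p c \<le> subtree_weight E p (P ! Suc i))) \<and>
     (\<forall>c. (last P, c) \<notin> E)"

end

theory Submission
  imports Defs
begin

text \<open>Every node v off the heavy path H lies in the subtree of a light child c of some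
  node of H; let h be the heavy child of that node. The subtrees of c and h are disjoint,
  so p(T_v) \<le> p(T_c) \<le> p(T_h) and p(T_c) + p(T_h) \<le> p(T). Hence
  2p(T_v) - p(T) \<le> 2p(T_h) - p(T) \<le> p(T) - 2p(T_v), i.e. the node h of H is at least
  as close to the middle as v.\<close>

lemma rtrancl_common_descendant_comparable:
  assumes unique_parent: "\<forall>v u w. (u, v) \<in> E \<and> (w, v) \<in> E \<longrightarrow> u = w"
    and "(a, x) \<in> E\<^sup>*" and "(b, x) \<in> E\<^sup>*"
  shows "(a, b) \<in> E\<^sup>* \<or> (b, a) \<in> E\<^sup>*"
  using assms(2,3)
proof (induction rule: rtrancl_induct)
  case base
  then show ?case by simp
next
  case (step y z)
  from step.prems show ?case
  proof (cases rule: rtranclE)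
    case base
    then show ?thesis using step.hyps by (meson rtrancl.rtrancl_into_rtrancl)
  next
    case (step w)
    then have "w = y" using unique_parent \<open>(y, z) \<in> E\<close> by blast
    then show ?thesis using step.IH step by blast
  qed
qed

lemma rooted_tree_acyclic:
  assumes tree: "rooted_tree V E r" and "x \<in> V"
  shows "(x, x) \<notin> E\<^sup>+"
proof -
  have unique_parent: "\<forall>v u w. (u, v) \<in> E \<and> (w, v) \<in> E \<longrightarrow> u = w"
    and root_orphan: "\<forall>v. (v, r) \<notin> E" and "(r, x) \<in> E\<^sup>*"
    using assms unfolding rooted_tree_def by auto
  from \<open>(r, x) \<in> E\<^sup>*\<close> show ?thesis
  proof (induction rule: rtrancl_induct)
    case base
    show ?case using root_orphan by (meson tranclE)
  next
    case (step y z)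
    show ?case
    proof
      assume "(z, z) \<in> E\<^sup>+"
      then obtain w where "(z, w) \<in> E\<^sup>*" and "(w, z) \<in> E"
        by (meson tranclD2)
      moreover from this have "w = y" using unique_parent step.hyps(2) by blast
      ultimately have "(y, y) \<in> E\<^sup>+" using step.hyps(2) by auto
      then show False using step.IH by blast
    qed
  qed
qed

lemma rooted_tree_subtree_subset:
  assumes "rooted_tree V E r" and "c \<in> V"
  shows "subtree E c \<subseteq> V"
proof
  fix x assume "x \<in> subtree E c"
  then have "(c, x) \<in> E\<^sup>*" unfolding subtree_def by auto
  then show "x \<in> V" using assms
    by (induction rule: rtrancl_induct) (auto simp: rooted_tree_def)
qed

lemma rooted_tree_sibling_subtrees_disjoint:
  assumes tree: "rooted_tree V E r"
    and "(x, c) \<in> E" and "(x, h) \<in> E" and "c \<noteq> h"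
  shows "subtree E c \<inter> subtree E h = {}"
proof -
  have unique_parent: "\<forall>v u w. (u, v) \<in> E \<and> (w, v) \<in> E \<longrightarrow> u = w"
    and "x \<in> V" using tree \<open>(x, c) \<in> E\<close> unfolding rooted_tree_def by auto
  have not_below: False if "(a, b) \<in> E\<^sup>*" "(x, a) \<in> E" "(x, b) \<in> E" "a \<noteq> b" for a b
  proof -
    from that obtain w where "(a, w) \<in> E\<^sup>*" and "(w, b) \<in> E"
      by (meson rtranclD tranclD2)
    moreover from this have "w = x" using unique_parent \<open>(x, b) \<in> E\<close> by blast
    ultimately have "(x, x) \<in> E\<^sup>+" using \<open>(x, a) \<in> E\<close> by auto
    then show False using rooted_tree_acyclic[OF tree \<open>x \<in> V\<close>] by blast
  qed
  show ?thesis
  proof (rule ccontr)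
    assume "subtree E c \<inter> subtree E h \<noteq> {}"
    then obtain y where "(c, y) \<in> E\<^sup>*" "(h, y) \<in> E\<^sup>*" unfolding subtree_def by auto
    then have "(c, h) \<in> E\<^sup>* \<or> (h, c) \<in> E\<^sup>*"
      using rtrancl_common_descendant_comparable[OF unique_parent] by blast
    then show False using not_below assms(2-4) by metis
  qed
qed

lemma subtree_weight_siblings_le:
  assumes tree: "rooted_tree V E r" and nonneg: "\<forall>v\<in>V. 0 \<le> p v"
    and "(x, c) \<in> E" and "(x, h) \<in> E" and "c \<noteq> h"
  shows "subtree_weight E p c + subtree_weight E p h \<le> sum p V"
proof -
  have "finite V" and "c \<in> V" and "h \<in> V"
    using assms unfolding rooted_tree_def by auto
  then have sub: "subtree E c \<subseteq> V" "subtree E h \<subseteq> V"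
    using rooted_tree_subtree_subset[OF tree] by auto
  have "subtree_weight E p c + subtree_weight E p h = sum p (subtree E c \<union> subtree E h)"
    unfolding subtree_weight_def
    using rooted_tree_sibling_subtrees_disjoint[OF assms(1,3-5)] sub \<open>finite V\<close>
    by (metis finite_subset sum.union_disjoint)
  also have "\<dots> \<le> sum p V"
    using sub \<open>finite V\<close> nonneg by (intro sum_mono2) auto
  finally show ?thesis .
qed

lemma subtree_weight_descendant_le:
  assumes tree: "rooted_tree V E r" and nonneg: "\<forall>v\<in>V. 0 \<le> p v"
    and "c \<in> V" and "(c, v) \<in> E\<^sup>*"
  shows "subtree_weight E p v \<le> subtree_weight E p c"
proof -
  have "finite V" using tree unfolding rooted_tree_def by auto
  have sub: "subtree E c \<subseteq> V" using rooted_tree_subtree_subset[OF tree \<open>c \<in> V\<close>] .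
  have "subtree E v \<subseteq> subtree E c"
    using \<open>(c, v) \<in> E\<^sup>*\<close> unfolding subtree_def by (auto intro: rtrancl_trans)
  then show ?thesis
    unfolding subtree_weight_def using sub \<open>finite V\<close> nonneg
    by (intro sum_mono2) (auto intro: finite_subset)
qed

text \<open>Only the path structure of P matters here, not the heaviness of its edges: v branches
  off at the last node of P that is an ancestor of v, which is not the leaf at the end of P.\<close>

lemma heavy_root_path_branch_off:
  assumes path: "heavy_root_path E p r P"
    and "(r, v) \<in> E\<^sup>*" and "v \<notin> set P"
  obtains i c where "Suc i < length P" and "(P ! i, c) \<in> E" and "c \<noteq> P ! Suc i"
    and "(c, v) \<in> E\<^sup>*"
proof -
  have "P \<noteq> []" and "hd P = r" and path_edge: "\<And>i. Suc i < length P \<Longrightarrow> (P ! i, P ! Suc i) \<in> E"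
    and leaf: "\<forall>c. (last P, c) \<notin> E"
    using path unfolding heavy_root_path_def by auto
  define A where "A = {i. i < length P \<and> (P ! i, v) \<in> E\<^sup>*}"
  have "0 \<in> A" using \<open>P \<noteq> []\<close> \<open>hd P = r\<close> \<open>(r, v) \<in> E\<^sup>*\<close>
    unfolding A_def by (simp add: hd_conv_nth)
  moreover have "finite A" unfolding A_def by auto
  ultimately have "Max A \<in> A" and A_le: "\<And>j. j \<in> A \<Longrightarrow> j \<le> Max A"
    by (auto intro: Max_in)
  define i where "i = Max A"
  have "i < length P" and "(P ! i, v) \<in> E\<^sup>*"
    using \<open>Max A \<in> A\<close> unfolding A_def i_def by auto
  moreover have "P ! i \<noteq> v" using \<open>i < length P\<close> \<open>v \<notin> set P\<close> by auto
  ultimately obtain c where c: "(P ! i, c) \<in> E" and "(c, v) \<in> E\<^sup>*"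
    by (meson converse_rtranclE)
  have "P ! i \<noteq> last P" using c leaf by metis
  then have "Suc i < length P" using \<open>i < length P\<close> \<open>P \<noteq> []\<close>
    by (metis Suc_lessI last_conv_nth diff_Suc_1)
  moreover have "c \<noteq> P ! Suc i"
  proof
    assume "c = P ! Suc i"
    then have "Suc i \<in> A" using \<open>Suc i < length P\<close> \<open>(c, v) \<in> E\<^sup>*\<close> unfolding A_def by auto
    then show False using A_le unfolding i_def by fastforce
  qed
  ultimately show thesis using that c \<open>(c, v) \<in> E\<^sup>*\<close> by blast
qed

lemma abs_double_minus_le:
  fixes x y s :: real
  assumes "x \<le> y" and "x + y \<le> s"
  shows "\<bar>2 * y - s\<bar> \<le> \<bar>2 * x - s\<bar>"
  using assms by linarith

lemma heavy_root_path_dominates: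
  assumes tree: "rooted_tree V E r" and nonneg: "\<forall>v\<in>V. 0 \<le> p v"
    and path: "heavy_root_path E p r P" and "v \<in> V"
  shows "\<exists>w\<in>set P. \<bar>2 * subtree_weight E p w - sum p V\<bar>
                    \<le> \<bar>2 * subtree_weight E p v - sum p V\<bar>"
proof (cases "v \<in> set P")
  case True
  then show ?thesis by blast
next
  case False
  have "(r, v) \<in> E\<^sup>*" using tree \<open>v \<in> V\<close> unfolding rooted_tree_def by auto
  with False obtain i c where "Suc i < length P" and c: "(P ! i, c) \<in> E"
    and "c \<noteq> P ! Suc i" and "(c, v) \<in> E\<^sup>*"
    using heavy_root_path_branch_off[OF path] by blast
  define h where "h = P ! Suc i"
  have h: "(P ! i, h) \<in> E" and heavy: "subtree_weight E p c \<le> subtree_weight E p h"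
    using path \<open>Suc i < length P\<close> c unfolding heavy_root_path_def h_def by auto
  have "c \<in> V" using tree c unfolding rooted_tree_def by auto
  have "subtree_weight E p v \<le> subtree_weight E p c"
    using subtree_weight_descendant_le[OF tree nonneg \<open>c \<in> V\<close> \<open>(c, v) \<in> E\<^sup>*\<close>] .
  moreover have "subtree_weight E p c + subtree_weight E p h \<le> sum p V"
    using subtree_weight_siblings_le[OF tree nonneg c h] \<open>c \<noteq> P ! Suc i\<close> h_def by blast
  ultimately have "\<bar>2 * subtree_weight E p h - sum p V\<bar> \<le> \<bar>2 * subtree_weight E p v - sum p V\<bar>"
    using heavy by (intro abs_double_minus_le) linarith+
  moreover have "h \<in> set P" unfolding h_def using \<open>Suc i < length P\<close> by simp
  ultimately show ?thesis by blast
qed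

theorem theorem5:
  fixes V :: "'a set" and E :: "('a \<times> 'a) set" and r :: 'a
    and p :: "'a \<Rightarrow> real" and P :: "'a list" and u :: 'a
  assumes "rooted_tree V E r"
    and "\<forall>v\<in>V. 0 \<le> p v"
    and "heavy_root_path E p r P"
    and "u \<in> set P"
    and "\<forall>w\<in>set P. \<bar>2 * subtree_weight E p u - sum p V\<bar>
                     \<le> \<bar>2 * subtree_weight E p w - sum p V\<bar>"
  shows "\<forall>v\<in>V. \<bar>2 * subtree_weight E p u - sum p V\<bar>
               \<le> \<bar>2 * subtree_weight E p v - sum p V\<bar>"
proof
  fix v assume "v \<in> V"
  then obtain w where "w \<in> set P"
    and "\<bar>2 * subtree_weight E p w - sum p V\<bar> \<le> \<bar>2 * subtree_weight E p v - sum p V\<bar>"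
    using heavy_root_path_dominates[OF assms(1-3)] by blast
  with assms(5) show "\<bar>2 * subtree_weight E p u - sum p V\<bar>
                      \<le> \<bar>2 * subtree_weight E p v - sum p V\<bar>"
    by fastforce
qed

end
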